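(* Let $G$ be an undirected graph on $n$ vertices with nonnegative edge weights, let $0<\epsilon<1$, and let $\widehat{G}$ be an $\epsilon$-spectral sparsifier of $G$. Let $\mu_1\geq\cdots\geq\mu_n$ be the eigenvalues of $L_G$ with respective eigenvectors $x_1,\dots,x_n$, and let $\widehat{\mu}_1\geq\cdots\geq\widehat{\mu}_n$ be the eigenvalues of $L_{\widehat{G}}$ with respective eigenvectors $\widehat{x}_1,\dots,\widehat{x}_n$. Then 1. $\|L_G-L_{\widehat{G}}\|\leq\epsilon\,\rho(L_G)$, and 2. if $\theta_i$ is the angle between $x_i$ and $\widehat{x}_i$, then \[ \sin\theta_i\leq\frac{\epsilon\,\rho(L_G)}{\min\{|\mu_i-\widehat{\mu}_{i-1}|,\ |\mu_i-\widehat{\mu}_{i+1}|\}}, \] where it is assumed that $|\mu_i-\widehat{\mu}_{i\pm1}|\neq 0$ for all $i=1,\dots,n$.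
   Context: For a simple undirected graph $G$ on vertices $v_1,\dots,v_n$ with edge weights $w_{ij}\geq 0$ (and $w_{ij}=0$ for non-edges), the adjacency matrix is $(A_G)_{ij}=w_{ij}$ for $i\neq j$, $(A_G)_{ii}=0$; the degree matrix $D_G$ is diagonal with $(D_G)_{ii}=\sum_j w_{ij}$; the Laplacian is $L_G=D_G-A_G$. For $\epsilon\in(0,1)$, a weighted graph $\widehat{G}$ on the same vertex set is an $\epsilon$-spectral sparsifier of $G$ if $(1-\epsilon)x^TL_Gx\leq x^TL_{\widehat{G}}x\leq(1+\epsilon)x^TL_Gx$ for all $x\in\mathbb{R}^n$. $\|\cdot\|$ is the spectral (2-)norm and $\rho(\cdot)$ the spectral radius. For the boundary indices the conventions $\widehat{\mu}_0=+\infty$, $\widehat{\mu}_{n+1}=-\infty$ are used. *)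

theory Defs
  imports "HOL-Analysis.Analysis"
begin

text \<open>Weighted graphs on the vertex type 'n (finite): weight function w, with
  w i j the weight of edge {i,j} (0 for non-edges).\<close>

definition weighted_graph :: "('n::finite \<Rightarrow> 'n \<Rightarrow> real) \<Rightarrow> bool" where
  "weighted_graph w \<longleftrightarrow> (\<forall>i j. w i j \<ge> 0) \<and> (\<forall>i j. w i j = w j i) \<and> (\<forall>i. w i i = 0)"

definition adj_matrix :: "('n::finite \<Rightarrow> 'n \<Rightarrow> real) \<Rightarrow> real^'n^'n" where
  "adj_matrix w = (\<chi> i j. if i = j then 0 else w i j)"

definition deg_matrix :: "('n::finite \<Rightarrow> 'n \<Rightarrow> real) \<Rightarrow> real^'n^'n" where
  "deg_matrix w = (\<chi> i j. if i = j then (\<Sum>k\<in>UNIV. w i k) else 0)"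

definition laplacian :: "('n::finite \<Rightarrow> 'n \<Rightarrow> real) \<Rightarrow> real^'n^'n" where
  "laplacian w = deg_matrix w - adj_matrix w"

definition spectral_sparsifier ::
  "real \<Rightarrow> ('n::finite \<Rightarrow> 'n \<Rightarrow> real) \<Rightarrow> ('n \<Rightarrow> 'n \<Rightarrow> real) \<Rightarrow> bool" where
  "spectral_sparsifier \<epsilon> w wh \<longleftrightarrow> weighted_graph wh \<and>
     (\<forall>x::real^'n. (1 - \<epsilon>) * (x \<bullet> (laplacian w *v x)) \<le> x \<bullet> (laplacian wh *v x) \<and>
                    x \<bullet> (laplacian wh *v x) \<le> (1 + \<epsilon>) * (x \<bullet> (laplacian w *v x)))"

definition spec_norm :: "real^'n::finite^'m::finite \<Rightarrow> real" where
  "spec_norm A = onorm (\<lambda>x. A *v x)"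

text \<open>Eigenvalues and spectral radius (for real matrices, real eigenvalues; for the
  symmetric matrices considered here all eigenvalues are real).\<close>
definition is_eigenvalue :: "real^'n::finite^'n \<Rightarrow> real \<Rightarrow> bool" where
  "is_eigenvalue A c \<longleftrightarrow> (\<exists>x. x \<noteq> 0 \<and> A *v x = c *\<^sub>R x)"

definition spec_radius :: "real^'n::finite^'n \<Rightarrow> real" where
  "spec_radius A = Max {\<bar>c\<bar> | c. is_eigenvalue A c}"

definition vec_angle :: "'a::real_inner \<Rightarrow> 'a \<Rightarrow> real" where
  "vec_angle x y = arccos ((x \<bullet> y) / (norm x * norm y))"

definition ext_eig :: "nat \<Rightarrow> (nat \<Rightarrow> real) \<Rightarrow> nat \<Rightarrow> ereal" where
  "ext_eig n \<mu> i = (if i = 0 then \<infinity> else if i = n + 1 then -\<infinity> else ereal (\<mu> i))"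

text \<open>mu_1 >= ... >= mu_n, with eigenvectors x_1..x_n forming a basis
  (so the mu_i are all eigenvalues, counted with multiplicity).\<close>
definition eigen_decomp :: "real^'n::finite^'n \<Rightarrow> (nat \<Rightarrow> real) \<Rightarrow> (nat \<Rightarrow> real^'n) \<Rightarrow> bool" where
  "eigen_decomp A \<mu> x \<longleftrightarrow>
     (\<forall>i\<in>{1..CARD('n)}. x i \<noteq> 0 \<and> A *v x i = \<mu> i *\<^sub>R x i) \<and>
     (\<forall>i j. 1 \<le> i \<longrightarrow> i \<le> j \<longrightarrow> j \<le> CARD('n) \<longrightarrow> \<mu> j \<le> \<mu> i) \<and>
     inj_on x {1..CARD('n)} \<and> independent (x ` {1..CARD('n)})"

end

theory Submission
  imports Defs
begin

text \<open>
  Let \<open>E = L\<^sub>G - L\<^sub>H\<close>, where \<open>H\<close> is the sparsifier, and let \<open>\<mu>'\<^sub>j\<close>, \<open>x'\<^sub>j\<close> be the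
  eigenpairs of \<open>L\<^sub>H\<close>. The sparsifier inequalities give
  \<open>\<bar>v \<bullet> E v\<bar> \<le> \<epsilon> (v \<bullet> L\<^sub>G v) \<le> \<epsilon> \<rho>(L\<^sub>G) \<parallel>v\<parallel>\<^sup>2\<close>, and for a symmetric matrix such
  a bound on the quadratic form bounds the operator norm, by polarization.

  Part 2 is a Davis--Kahan argument. By Weyl's inequality \<open>\<bar>\<mu>\<^sub>j - \<mu>'\<^sub>j\<bar> \<le> \<epsilon> \<rho>(L\<^sub>G)\<close>
  for all \<open>j\<close>. Let \<open>g\<close> be at most both gaps \<open>\<bar>\<mu>\<^sub>i - \<mu>'\<^bsub>i-1\<^esub>\<bar>\<close> and
  \<open>\<bar>\<mu>\<^sub>i - \<mu>'\<^bsub>i+1\<^esub>\<bar>\<close>. If \<open>g \<le> \<epsilon> \<rho>(L\<^sub>G)\<close>, then \<open>g sin \<theta>\<^sub>i \<le> \<epsilon> \<rho>(L\<^sub>G)\<close>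
  trivially. Otherwise Weyl's inequality forces \<open>\<mu>'\<^bsub>i+1\<^esub> \<le> \<mu>\<^sub>i \<le> \<mu>'\<^bsub>i-1\<^esub>\<close>, so every
  \<open>\<mu>'\<^sub>j\<close> with \<open>j \<noteq> i\<close> lies at distance at least \<open>g\<close> from \<open>\<mu>\<^sub>i\<close>. Writing the unit vector
  \<open>x\<^sub>i\<close> as a multiple of \<open>x'\<^sub>i\<close> plus an orthogonal part \<open>q\<close>, so that \<open>\<parallel>q\<parallel> = sin \<theta>\<^sub>i\<close>,
  and expanding \<open>q\<close> in the other eigenvectors of \<open>L\<^sub>H\<close>, one gets
  \<open>g \<parallel>q\<parallel> \<le> \<parallel>(L\<^sub>H - \<mu>\<^sub>i) q\<parallel> \<le> \<parallel>(L\<^sub>H - \<mu>\<^sub>i) x\<^sub>i\<parallel> = \<parallel>E x\<^sub>i\<parallel> \<le> \<epsilon> \<rho>(L\<^sub>G)\<close>.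
\<close>

lemma symmetric_matrix_inner:
  fixes A :: "real^'n::finite^'n"
  assumes "transpose A = A"
  shows "(A *v x) \<bullet> y = x \<bullet> (A *v y)"
  by (metis assms dot_lmul_matrix inner_commute vector_transpose_matrix)

lemma symmetric_matrix_eigenvectors_orthogonal:
  fixes A :: "real^'n::finite^'n"
  assumes "transpose A = A" "A *v a = \<alpha> *\<^sub>R a" "A *v b = \<beta> *\<^sub>R b" "\<alpha> \<noteq> \<beta>"
  shows "a \<bullet> b = 0"
proof -
  have "\<alpha> * (a \<bullet> b) = (A *v a) \<bullet> b" using assms by simp
  also have "\<dots> = a \<bullet> (A *v b)" by (rule symmetric_matrix_inner[OF assms(1)])
  also have "\<dots> = \<beta> * (a \<bullet> b)" using assms by simp
  finally show ?thesis using assms(4) by simp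
qed

text \<open>
  The eigenbases of \<^const>\<open>eigen_decomp\<close> need not be orthogonal: only eigenvectors of distinct
  eigenvalues are. Families labelled by \<open>\<alpha>\<close> in this weaker sense suffice for the expansions below.
\<close>

lemma orthogonal_family_sum_inner:
  fixes a :: "'j \<Rightarrow> 'v::real_inner"
  assumes "\<forall>j\<in>J. \<forall>k\<in>J. \<alpha> j \<noteq> \<alpha> k \<longrightarrow> a j \<bullet> a k = 0"
  shows "(\<Sum>j\<in>J. (c j * f (\<alpha> j)) *\<^sub>R a j) \<bullet> (\<Sum>k\<in>J. (c k * g (\<alpha> k)) *\<^sub>R a k) =
    (\<Sum>j\<in>J. \<Sum>k\<in>J. c j * c k * (f (\<alpha> k) * g (\<alpha> k)) * (a j \<bullet> a k))"
  unfolding inner_sum_left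
  by (simp add: inner_sum_right, intro sum.cong refl) (use assms in \<open>fastforce simp: mult_ac\<close>)

lemma orthogonal_family_sum_inner_mono:
  fixes a :: "'j \<Rightarrow> 'v::real_inner"
  assumes orth: "\<forall>j\<in>J. \<forall>k\<in>J. \<alpha> j \<noteq> \<alpha> k \<longrightarrow> a j \<bullet> a k = 0"
    and le: "\<forall>j\<in>J. f (\<alpha> j) * g (\<alpha> j) \<le> f' (\<alpha> j) * g' (\<alpha> j)"
  shows "(\<Sum>j\<in>J. (c j * f (\<alpha> j)) *\<^sub>R a j) \<bullet> (\<Sum>j\<in>J. (c j * g (\<alpha> j)) *\<^sub>R a j) \<le>
    (\<Sum>j\<in>J. (c j * f' (\<alpha> j)) *\<^sub>R a j) \<bullet> (\<Sum>j\<in>J. (c j * g' (\<alpha> j)) *\<^sub>R a j)"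
proof -
  define h where "h t = sqrt (f' t * g' t - f t * g t)" for t
  let ?w = "\<Sum>j\<in>J. (c j * h (\<alpha> j)) *\<^sub>R a j"
  have hsq: "\<forall>j\<in>J. h (\<alpha> j) * h (\<alpha> j) = f' (\<alpha> j) * g' (\<alpha> j) - f (\<alpha> j) * g (\<alpha> j)"
    using le by (simp add: h_def)
  have "(\<Sum>j\<in>J. (c j * f' (\<alpha> j)) *\<^sub>R a j) \<bullet> (\<Sum>j\<in>J. (c j * g' (\<alpha> j)) *\<^sub>R a j) -
      (\<Sum>j\<in>J. (c j * f (\<alpha> j)) *\<^sub>R a j) \<bullet> (\<Sum>j\<in>J. (c j * g (\<alpha> j)) *\<^sub>R a j) =
      (\<Sum>j\<in>J. \<Sum>k\<in>J. c j * c k * (f' (\<alpha> k) * g' (\<alpha> k) - f (\<alpha> k) * g (\<alpha> k)) * (a j \<bullet> a k))"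
    unfolding orthogonal_family_sum_inner[OF orth, where f=f' and g=g']
      orthogonal_family_sum_inner[OF orth, where f=f and g=g]
    by (simp add: right_diff_distrib left_diff_distrib sum_subtractf)
  also have "\<dots> = ?w \<bullet> ?w"
    unfolding orthogonal_family_sum_inner[OF orth, where f=h and g=h]
    by (intro sum.cong refl) (simp add: hsq)
  finally show ?thesis using inner_ge_zero[of ?w] by linarith
qed

lemma symmetric_matrix_eigenvector_family_orthogonal:
  fixes A :: "real^'n::finite^'n"
  assumes "transpose A = A" and "\<forall>j\<in>J. A *v a j = \<alpha> j *\<^sub>R a j"
  shows "\<forall>j\<in>J. \<forall>k\<in>J. \<alpha> j \<noteq> \<alpha> k \<longrightarrow> a j \<bullet> a k = 0"
  using assms symmetric_matrix_eigenvectors_orthogonal by blast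

lemma matrix_vector_mult_eigen_expansion:
  fixes A :: "real^'n::finite^'n"
  assumes "\<forall>j\<in>J. A *v a j = \<alpha> j *\<^sub>R a j"
  shows "A *v (\<Sum>j\<in>J. c j *\<^sub>R a j) = (\<Sum>j\<in>J. (c j * \<alpha> j) *\<^sub>R a j)"
  unfolding vec.sum by (intro sum.cong refl) (simp add: matrix_vector_mult_scaleR assms)

lemma eigen_expansion_rayleigh_ge:
  fixes A :: "real^'n::finite^'n"
  assumes "transpose A = A" and eig: "\<forall>j\<in>J. A *v a j = \<alpha> j *\<^sub>R a j"
    and "\<forall>j\<in>J. m \<le> \<alpha> j" and v: "v = (\<Sum>j\<in>J. c j *\<^sub>R a j)"
  shows "m * (v \<bullet> v) \<le> v \<bullet> (A *v v)"
  using orthogonal_family_sum_inner_mono[OF symmetric_matrix_eigenvector_family_orthogonal[OF assms(1,2)],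
      where f="\<lambda>_. m" and g="\<lambda>_. 1" and f'="\<lambda>_. 1" and g'=id and c=c] assms(3)
  by (simp add: v matrix_vector_mult_eigen_expansion[OF eig] scaleR_sum_right mult.commute
      flip: inner_scaleR_left)

lemma eigen_expansion_rayleigh_le:
  fixes A :: "real^'n::finite^'n"
  assumes "transpose A = A" and eig: "\<forall>j\<in>J. A *v a j = \<alpha> j *\<^sub>R a j"
    and "\<forall>j\<in>J. \<alpha> j \<le> M" and v: "v = (\<Sum>j\<in>J. c j *\<^sub>R a j)"
  shows "v \<bullet> (A *v v) \<le> M * (v \<bullet> v)"
  using orthogonal_family_sum_inner_mono[OF symmetric_matrix_eigenvector_family_orthogonal[OF assms(1,2)],
      where f="\<lambda>_. 1" and g=id and f'="\<lambda>_. M" and g'="\<lambda>_. 1" and c=c] assms(3)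
  by (simp add: v matrix_vector_mult_eigen_expansion[OF eig] scaleR_sum_right mult.commute
      flip: inner_scaleR_left)

lemma eigen_expansion_residual_ge:
  fixes A :: "real^'n::finite^'n"
  assumes "transpose A = A" and eig: "\<forall>j\<in>J. A *v a j = \<alpha> j *\<^sub>R a j"
    and "0 \<le> G" and "\<forall>j\<in>J. G \<le> \<bar>\<alpha> j - m\<bar>" and v: "v = (\<Sum>j\<in>J. c j *\<^sub>R a j)"
  shows "G * norm v \<le> norm (A *v v - m *\<^sub>R v)"
proof -
  have orth: "\<forall>j\<in>J. \<forall>k\<in>J. \<alpha> j \<noteq> \<alpha> k \<longrightarrow> a j \<bullet> a k = 0"
    by (rule symmetric_matrix_eigenvector_family_orthogonal[OF assms(1,2)])
  have sq: "\<forall>j\<in>J. G * G \<le> (\<alpha> j - m) * (\<alpha> j - m)"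
  proof
    fix j assume "j \<in> J"
    then have "\<bar>G\<bar> \<le> \<bar>\<alpha> j - m\<bar>" using assms(3,4) by simp
    then show "G * G \<le> (\<alpha> j - m) * (\<alpha> j - m)" by (metis abs_mult_self_eq abs_of_nonneg abs_ge_zero mult_mono')
  qed
  have Gv: "G *\<^sub>R v = (\<Sum>j\<in>J. (c j * G) *\<^sub>R a j)"
    by (simp add: v scaleR_sum_right mult.commute)
  have res: "A *v v - m *\<^sub>R v = (\<Sum>j\<in>J. (c j * (\<alpha> j - m)) *\<^sub>R a j)"
    unfolding v matrix_vector_mult_eigen_expansion[OF eig] scaleR_sum_right sum_subtractf[symmetric]
    by (intro sum.cong refl) (simp add: algebra_simps)
  have "(G *\<^sub>R v) \<bullet> (G *\<^sub>R v) \<le> (A *v v - m *\<^sub>R v) \<bullet> (A *v v - m *\<^sub>R v)"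
    unfolding Gv res
    using orthogonal_family_sum_inner_mono[OF orth,
      where f="\<lambda>_. G" and g="\<lambda>_. G" and f'="\<lambda>t. t - m" and g'="\<lambda>t. t - m" and c=c] sq
    by simp
  then have "norm (G *\<^sub>R v) \<le> norm (A *v v - m *\<^sub>R v)"
    by (simp add: norm_eq_sqrt_inner)
  then show ?thesis using assms(3) by simp
qed

lemma in_span_imageE:
  fixes a :: "'j \<Rightarrow> 'v::real_vector"
  assumes "finite J" "inj_on a J" "v \<in> span (a ` J)"
  obtains c where "v = (\<Sum>j\<in>J. c j *\<^sub>R a j)"
proof -
  obtain u where "v = (\<Sum>w\<in>a ` J. u w *\<^sub>R w)"
    using assms(1,3) span_finite[of "a ` J"] by auto
  also have "\<dots> = (\<Sum>j\<in>J. u (a j) *\<^sub>R a j)"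
    by (simp add: sum.reindex assms(2))
  finally show ?thesis by (rule that)
qed

lemma eigen_decomp_eigenvectors:
  assumes "eigen_decomp (A::real^'n::finite^'n) \<alpha> a"
  shows "\<forall>j\<in>{1..CARD('n)}. A *v a j = \<alpha> j *\<^sub>R a j"
  using assms unfolding eigen_decomp_def by auto

lemma eigen_decomp_antimono_on:
  assumes "eigen_decomp (A::real^'n::finite^'n) \<alpha> a"
  shows "antimono_on {1..CARD('n)} \<alpha>"
  using assms unfolding eigen_decomp_def monotone_on_def by auto

lemma eigen_decomp_span:
  assumes "eigen_decomp (A::real^'n::finite^'n) \<alpha> a"
  shows "span (a ` {1..CARD('n)}) = UNIV"
proof -
  have ind: "independent (a ` {1..CARD('n)})" and inj: "inj_on a {1..CARD('n)}"
    using assms unfolding eigen_decomp_def by auto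
  have "dim (UNIV :: (real^'n) set) \<le> card (a ` {1..CARD('n)})"
    using inj by (simp add: card_image)
  then have "UNIV \<subseteq> span (a ` {1..CARD('n)})"
    by (intro card_ge_dim_independent[OF _ ind]) auto
  then show ?thesis by auto
qed

lemma eigen_decomp_expansionE:
  assumes "eigen_decomp (A::real^'n::finite^'n) \<alpha> a"
  obtains c where "v = (\<Sum>j\<in>{1..CARD('n)}. c j *\<^sub>R a j)"
  using in_span_imageE[of "{1..CARD('n)}" a v] eigen_decomp_span[OF assms] assms
  unfolding eigen_decomp_def by auto

lemma independent_families_common_vector:
  fixes a b :: "nat \<Rightarrow> real^'n::finite"
  assumes "independent (a ` {1..k})" "inj_on a {1..k}"
    and "independent (b ` {k..CARD('n)})" "inj_on b {k..CARD('n)}"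
    and "1 \<le> k"
  obtains v where "v \<noteq> 0" "v \<in> span (a ` {1..k})" "v \<in> span (b ` {k..CARD('n)})"
proof -
  let ?S = "span (a ` {1..k})" and ?T = "span (b ` {k..CARD('n)})"
  have "dim ?S = k"
    using dim_span_eq_card_independent[OF assms(1)] assms(2) by (simp add: card_image)
  moreover have "dim ?T = CARD('n) + 1 - k"
    using dim_span_eq_card_independent[OF assms(3)] assms(4) by (simp add: card_image)
  moreover have "dim {x + y |x y. x \<in> ?S \<and> y \<in> ?T} + dim (?S \<inter> ?T) = dim ?S + dim ?T"
    by (intro dim_sums_Int subspace_span)
  moreover have "dim {x + y |x y. x \<in> ?S \<and> y \<in> ?T} \<le> CARD('n)"
    using dim_subset_UNIV[where 'a="real^'n"] by simp
  ultimately have "dim (?S \<inter> ?T) \<noteq> 0" using assms(5) by linarith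
  then show ?thesis using that unfolding dim_eq_0 by blast
qed

lemma eigenvalue_le_of_quadratic_form_le:
  fixes A B :: "real^'n::finite^'n"
  assumes symA: "transpose A = A" and symB: "transpose B = B"
    and edA: "eigen_decomp A \<alpha> a" and edB: "eigen_decomp B \<beta> b"
    and le: "\<forall>v. v \<bullet> (A *v v) \<le> v \<bullet> (B *v v) + c * (v \<bullet> v)"
    and k: "k \<in> {1..CARD('n)}"
  shows "\<alpha> k \<le> \<beta> k + c"
proof -
  have sub: "{1..k} \<subseteq> {1..CARD('n)}" "{k..CARD('n)} \<subseteq> {1..CARD('n)}" using k by auto
  have ind: "independent (a ` {1..k})" "inj_on a {1..k}"
    "independent (b ` {k..CARD('n)})" "inj_on b {k..CARD('n)}"
    using edA edB sub independent_mono inj_on_subset unfolding eigen_decomp_def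
    by (metis image_mono)+
  obtain v where v: "v \<noteq> 0" "v \<in> span (a ` {1..k})" "v \<in> span (b ` {k..CARD('n)})"
    using independent_families_common_vector[OF ind] k by auto
  obtain c1 where c1: "v = (\<Sum>j\<in>{1..k}. c1 j *\<^sub>R a j)"
    using in_span_imageE[OF _ ind(2) v(2)] by auto
  obtain c2 where c2: "v = (\<Sum>j\<in>{k..CARD('n)}. c2 j *\<^sub>R b j)"
    using in_span_imageE[OF _ ind(4) v(3)] by auto
  have "\<forall>j\<in>{1..k}. A *v a j = \<alpha> j *\<^sub>R a j" "\<forall>j\<in>{1..k}. \<alpha> k \<le> \<alpha> j"
    "\<forall>j\<in>{k..CARD('n)}. B *v b j = \<beta> j *\<^sub>R b j" "\<forall>j\<in>{k..CARD('n)}. \<beta> j \<le> \<beta> k"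
    using sub eigen_decomp_eigenvectors[OF edA] eigen_decomp_antimono_on[OF edA]
      eigen_decomp_eigenvectors[OF edB] eigen_decomp_antimono_on[OF edB] k
    by (auto simp: monotone_on_def)
  then have "\<alpha> k * (v \<bullet> v) \<le> v \<bullet> (A *v v)" "v \<bullet> (B *v v) \<le> \<beta> k * (v \<bullet> v)"
    using eigen_expansion_rayleigh_ge[OF symA _ _ c1] eigen_expansion_rayleigh_le[OF symB _ _ c2]
    by blast+
  then have "\<alpha> k * (v \<bullet> v) \<le> (\<beta> k + c) * (v \<bullet> v)"
    using le unfolding distrib_right by (meson add_right_mono order_trans)
  then show ?thesis using v(1) by simp
qed

lemma eigen_decomp_eigenvalue:
  fixes A :: "real^'n::finite^'n"
  assumes sym: "transpose A = A" and ed: "eigen_decomp A \<alpha> a" and "is_eigenvalue A c"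
  shows "\<exists>j\<in>{1..CARD('n)}. c = \<alpha> j"
proof (rule ccontr)
  assume ne: "\<not> (\<exists>j\<in>{1..CARD('n)}. c = \<alpha> j)"
  obtain v where v: "v \<noteq> 0" "A *v v = c *\<^sub>R v"
    using assms(3) unfolding is_eigenvalue_def by blast
  obtain d where d: "v = (\<Sum>j\<in>{1..CARD('n)}. d j *\<^sub>R a j)"
    by (rule eigen_decomp_expansionE[OF ed])
  have "\<forall>j\<in>{1..CARD('n)}. a j \<bullet> v = 0"
    using symmetric_matrix_eigenvectors_orthogonal[OF sym _ v(2)] eigen_decomp_eigenvectors[OF ed] ne
    by metis
  then have "v \<bullet> v = 0"
    by (subst (1) d) (simp add: inner_sum_left)
  then show False using v(1) by simp
qed

lemma abs_eigenvalue_le_spec_radius: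
  fixes A :: "real^'n::finite^'n"
  assumes sym: "transpose A = A" and ed: "eigen_decomp A \<alpha> a" and j: "j \<in> {1..CARD('n)}"
  shows "\<bar>\<alpha> j\<bar> \<le> spec_radius A"
proof -
  have "{\<bar>c\<bar> | c. is_eigenvalue A c} \<subseteq> (\<lambda>j. \<bar>\<alpha> j\<bar>) ` {1..CARD('n)}"
    using eigen_decomp_eigenvalue[OF sym ed] by blast
  then have "finite {\<bar>c\<bar> | c. is_eigenvalue A c}"
    by (rule finite_subset) simp
  moreover have "is_eigenvalue A (\<alpha> j)"
    using ed j unfolding eigen_decomp_def is_eigenvalue_def by auto
  ultimately show ?thesis
    unfolding spec_radius_def by (auto intro: Max_ge)
qed

lemma quadratic_form_le_spec_radius:
  fixes A :: "real^'n::finite^'n"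
  assumes sym: "transpose A = A" and ed: "eigen_decomp A \<alpha> a"
  shows "v \<bullet> (A *v v) \<le> spec_radius A * (v \<bullet> v)"
proof -
  obtain c where "v = (\<Sum>j\<in>{1..CARD('n)}. c j *\<^sub>R a j)"
    by (rule eigen_decomp_expansionE[OF ed])
  moreover have "\<forall>j\<in>{1..CARD('n)}. \<alpha> j \<le> spec_radius A"
    using abs_eigenvalue_le_spec_radius[OF sym ed] by force
  ultimately show ?thesis
    using eigen_expansion_rayleigh_le[OF sym eigen_decomp_eigenvectors[OF ed]] by blast
qed

lemma symmetric_matrix_norm_le_of_quadratic_form:
  fixes E :: "real^'n::finite^'n"
  assumes sym: "transpose E = E" and "0 \<le> C" and quad: "\<forall>v. \<bar>v \<bullet> (E *v v)\<bar> \<le> C * (v \<bullet> v)"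
  shows "norm (E *v x) \<le> C * norm x"
proof -
  have polar: "4 * (z \<bullet> (E *v y)) \<le> 2 * C * (y \<bullet> y + z \<bullet> z)" for y z
  proof -
    have "4 * (z \<bullet> (E *v y)) = (y + z) \<bullet> (E *v (y + z)) - (y - z) \<bullet> (E *v (y - z))"
      using symmetric_matrix_inner[OF sym, of z y]
      by (simp add: matrix_vector_right_distrib matrix_vector_mult_diff_distrib
          inner_add_left inner_add_right inner_diff_left inner_diff_right inner_commute)
    also have "\<dots> \<le> C * ((y + z) \<bullet> (y + z)) + C * ((y - z) \<bullet> (y - z))"
      using quad[rule_format, of "y + z"] quad[rule_format, of "y - z"] by linarith
    also have "\<dots> = 2 * C * (y \<bullet> y + z \<bullet> z)"
      by (simp add: inner_add_left inner_add_right inner_diff_left inner_diff_right inner_commute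
          algebra_simps)
    finally show ?thesis .
  qed
  define z where "z = (norm x / norm (E *v x)) *\<^sub>R (E *v x)"
  have "z \<bullet> z \<le> x \<bullet> x"
    by (cases "E *v x = 0") (simp_all add: z_def power2_norm_eq_inner[symmetric] power_divide)
  moreover have "z \<bullet> (E *v x) = norm x * norm (E *v x)"
    by (cases "E *v x = 0") (simp_all add: z_def power2_norm_eq_inner[symmetric] power2_eq_square)
  ultimately have "4 * (norm x * norm (E *v x)) \<le> 4 * (C * (norm x * norm x))"
    using polar[of z x] assms(2) mult_left_mono[of "z \<bullet> z" "x \<bullet> x" C]
    by (simp add: power2_norm_eq_inner[symmetric] power2_eq_square distrib_left)
  then show ?thesis
    by (cases "x = 0") (simp_all add: mult.assoc)
qed

lemma norm_diff_le_of_relative_quadratic_form: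
  fixes A B :: "real^'n::finite^'n"
  assumes symA: "transpose A = A" and symB: "transpose B = B" and ed: "eigen_decomp A \<alpha> a"
    and "0 \<le> \<epsilon>" and rel: "\<forall>v. \<bar>v \<bullet> (A *v v) - v \<bullet> (B *v v)\<bar> \<le> \<epsilon> * (v \<bullet> (A *v v))"
  shows "norm ((A - B) *v x) \<le> \<epsilon> * spec_radius A * norm x"
proof (rule symmetric_matrix_norm_le_of_quadratic_form)
  show "transpose (A - B) = A - B"
    using symA symB by (simp add: transpose_def vec_eq_iff)
  show "0 \<le> \<epsilon> * spec_radius A"
    using abs_eigenvalue_le_spec_radius[OF symA ed, of 1] assms(4) by simp
  show "\<forall>v. \<bar>v \<bullet> ((A - B) *v v)\<bar> \<le> \<epsilon> * spec_radius A * (v \<bullet> v)"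
  proof
    fix v
    have "\<bar>v \<bullet> ((A - B) *v v)\<bar> \<le> \<epsilon> * (v \<bullet> (A *v v))"
      using rel by (simp add: matrix_vector_mult_diff_rdistrib inner_diff_right)
    also have "\<dots> \<le> \<epsilon> * (spec_radius A * (v \<bullet> v))"
      using quadratic_form_le_spec_radius[OF symA ed] assms(4) by (simp add: mult_left_mono)
    finally show "\<bar>v \<bullet> ((A - B) *v v)\<bar> \<le> \<epsilon> * spec_radius A * (v \<bullet> v)"
      by (simp add: mult.assoc)
  qed
qed

lemma sin_vec_angle_eq_norm_reject:
  fixes x y :: "'a::real_inner"
  assumes "x \<noteq> 0" "y \<noteq> 0"
  shows "sin (vec_angle x y) = norm (sgn x - (sgn x \<bullet> sgn y) *\<^sub>R sgn y)"
proof -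
  define t where "t = sgn x \<bullet> sgn y"
  have unit: "sgn x \<bullet> sgn x = 1" "sgn y \<bullet> sgn y = 1"
    using assms by (simp_all add: dot_square_norm norm_sgn)
  have "vec_angle x y = arccos t"
    unfolding vec_angle_def t_def by (simp add: sgn_div_norm divide_inverse mult_ac)
  moreover have "\<bar>t\<bar> \<le> 1"
    using Cauchy_Schwarz_ineq2[of "sgn x" "sgn y"] assms by (simp add: t_def norm_sgn)
  moreover have "(sgn x - t *\<^sub>R sgn y) \<bullet> (sgn x - t *\<^sub>R sgn y) = 1 - t\<^sup>2"
    by (simp add: inner_diff_left inner_diff_right unit inner_commute t_def power2_eq_square)
  ultimately show ?thesis
    by (simp add: sin_arccos_abs norm_eq_sqrt_inner t_def)
qed

lemma symmetric_matrix_residual_reject_le: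
  fixes B :: "real^'n::finite^'n"
  assumes sym: "transpose B = B" and "B *v h = \<kappa> *\<^sub>R h" and "h \<bullet> q = 0"
  shows "norm (B *v q - m *\<^sub>R q) \<le> norm (B *v (q + t *\<^sub>R h) - m *\<^sub>R (q + t *\<^sub>R h))"
proof -
  have "h \<bullet> (B *v q - m *\<^sub>R q) = 0"
    using symmetric_matrix_inner[OF sym, of h q] assms(2,3) by (simp add: inner_diff_right)
  then have "orthogonal (B *v q - m *\<^sub>R q) ((t * (\<kappa> - m)) *\<^sub>R h)"
    by (simp add: orthogonal_def inner_commute)
  moreover have "B *v (q + t *\<^sub>R h) - m *\<^sub>R (q + t *\<^sub>R h) =
      (B *v q - m *\<^sub>R q) + (t * (\<kappa> - m)) *\<^sub>R h"
    using assms(2) by (simp add: matrix_vector_right_distrib matrix_vector_mult_scaleR algebra_simps)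
  ultimately show ?thesis
    using norm_add_Pythagorean by (metis le_add_same_cancel1 norm_ge_zero power2_le_imp_le zero_le_power2)
qed

lemma eigen_decomp_orthogonal_expansionE:
  fixes B :: "real^'n::finite^'n"
  assumes sym: "transpose B = B" and ed: "eigen_decomp B \<beta> b" and i: "i \<in> {1..CARD('n)}"
    and simple: "\<forall>j\<in>{1..CARD('n)} - {i}. \<beta> j \<noteq> \<beta> i" and "q \<bullet> b i = 0"
  obtains c where "q = (\<Sum>j\<in>{1..CARD('n)} - {i}. c j *\<^sub>R b j)"
proof -
  obtain c where c: "q = (\<Sum>j\<in>{1..CARD('n)}. c j *\<^sub>R b j)"
    by (rule eigen_decomp_expansionE[OF ed])
  have "\<forall>j\<in>{1..CARD('n)} - {i}. b j \<bullet> b i = 0"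
    using symmetric_matrix_eigenvectors_orthogonal[OF sym] eigen_decomp_eigenvectors[OF ed] simple i
    by blast
  then have "q \<bullet> b i = c i * (b i \<bullet> b i)"
    using i by (simp add: c inner_sum_left sum.remove[of _ i "\<lambda>j. c j * (b j \<bullet> b i)"])
  then have "c i = 0"
    using assms(5) ed i by (simp add: eigen_decomp_def)
  then show ?thesis
    using that i by (simp add: c sum.remove)
qed

lemma davis_kahan_sin_vec_angle_le:
  fixes B :: "real^'n::finite^'n"
  assumes sym: "transpose B = B" and ed: "eigen_decomp B \<beta> b" and i: "i \<in> {1..CARD('n)}"
    and "x \<noteq> 0" and res: "norm (B *v x - m *\<^sub>R x) \<le> C * norm x"
    and "0 \<le> G" and gap: "\<forall>j\<in>{1..CARD('n)} - {i}. G \<le> \<bar>\<beta> j - m\<bar>"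
  shows "G * sin (vec_angle x (b i)) \<le> C"
proof -
  let ?n = "CARD('n)"
  define u h where "u = sgn x" and "h = sgn (b i)"
  define q where "q = u - (u \<bullet> h) *\<^sub>R h"
  have eig: "\<forall>j\<in>{1..?n}. B *v b j = \<beta> j *\<^sub>R b j" by (rule eigen_decomp_eigenvectors[OF ed])
  have "b i \<noteq> 0" using ed i by (simp add: eigen_decomp_def)
  then have Bh: "B *v h = \<beta> i *\<^sub>R h" and "h \<bullet> h = 1"
    using eig i by (simp_all add: h_def sgn_div_norm matrix_vector_mult_scaleR dot_square_norm)
  then have hq: "h \<bullet> q = 0" by (simp add: q_def inner_diff_right inner_commute)
  have "norm (B *v q - m *\<^sub>R q) \<le> norm (B *v u - m *\<^sub>R u)"
    using symmetric_matrix_residual_reject_le[OF sym Bh hq, of m "u \<bullet> h"] by (simp add: q_def)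
  also have "\<dots> = norm (inverse (norm x) *\<^sub>R (B *v x - m *\<^sub>R x))"
    by (simp add: u_def sgn_div_norm matrix_vector_mult_scaleR scaleR_diff_right mult.commute)
  also have "\<dots> = norm (B *v x - m *\<^sub>R x) / norm x" by (simp add: divide_inverse_commute)
  also have "\<dots> \<le> C" using res \<open>x \<noteq> 0\<close> by (simp add: pos_divide_le_eq)
  finally have resq: "norm (B *v q - m *\<^sub>R q) \<le> C" .
  have "G * norm q \<le> norm (B *v q - m *\<^sub>R q)"
  proof (cases "G \<le> \<bar>\<beta> i - m\<bar>")
    case True
    obtain c where "q = (\<Sum>j\<in>{1..?n}. c j *\<^sub>R b j)" by (rule eigen_decomp_expansionE[OF ed])
    moreover have "\<forall>j\<in>{1..?n}. G \<le> \<bar>\<beta> j - m\<bar>" using gap True by blast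
    ultimately show ?thesis using eigen_expansion_residual_ge[OF sym eig \<open>0 \<le> G\<close>] by blast
  next
    case False
    \<comment> \<open>Then \<open>\<beta> i\<close> is simple, so \<open>q \<bullet> b i = 0\<close> removes the \<open>b i\<close>-component of \<open>q\<close>.\<close>
    then have "\<forall>j\<in>{1..?n} - {i}. \<beta> j \<noteq> \<beta> i" using gap by (metis (mono_tags, lifting))
    moreover have "q \<bullet> b i = 0"
      using hq \<open>b i \<noteq> 0\<close> by (simp add: h_def sgn_div_norm inner_commute)
    ultimately obtain c where "q = (\<Sum>j\<in>{1..?n} - {i}. c j *\<^sub>R b j)"
      using eigen_decomp_orthogonal_expansionE[OF sym ed i] by blast
    moreover have "\<forall>j\<in>{1..?n} - {i}. B *v b j = \<beta> j *\<^sub>R b j" using eig by blast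
    ultimately show ?thesis using eigen_expansion_residual_ge[OF sym _ \<open>0 \<le> G\<close> gap] by blast
  qed
  moreover have "sin (vec_angle x (b i)) = norm q"
    using sin_vec_angle_eq_norm_reject[OF \<open>x \<noteq> 0\<close> \<open>b i \<noteq> 0\<close>] by (simp add: q_def u_def h_def)
  ultimately show ?thesis using resq by simp
qed

lemma weyl_eigenvalue_perturbation:
  fixes A B :: "real^'n::finite^'n"
  assumes symA: "transpose A = A" and symB: "transpose B = B"
    and edA: "eigen_decomp A \<alpha> a" and edB: "eigen_decomp B \<beta> b"
    and norm: "\<forall>v. norm ((A - B) *v v) \<le> C * norm v" and k: "k \<in> {1..CARD('n)}"
  shows "\<bar>\<alpha> k - \<beta> k\<bar> \<le> C"
proof -
  have quad: "\<bar>v \<bullet> (A *v v) - v \<bullet> (B *v v)\<bar> \<le> C * (v \<bullet> v)" for v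
  proof -
    have "\<bar>v \<bullet> (A *v v) - v \<bullet> (B *v v)\<bar> = \<bar>v \<bullet> ((A - B) *v v)\<bar>"
      by (simp add: matrix_vector_mult_diff_rdistrib inner_diff_right)
    also have "\<dots> \<le> norm v * norm ((A - B) *v v)" by (rule Cauchy_Schwarz_ineq2)
    also have "\<dots> \<le> norm v * (C * norm v)" using norm by (simp add: mult_left_mono)
    finally show ?thesis by (simp add: dot_square_norm power2_eq_square mult_ac)
  qed
  have "\<forall>v. v \<bullet> (A *v v) \<le> v \<bullet> (B *v v) + C * (v \<bullet> v)"
    "\<forall>v. v \<bullet> (B *v v) \<le> v \<bullet> (A *v v) + C * (v \<bullet> v)"
    using quad unfolding abs_diff_le_iff by (meson diff_le_eq)+
  then have "\<alpha> k \<le> \<beta> k + C" "\<beta> k \<le> \<alpha> k + C"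
    using eigenvalue_le_of_quadratic_form_le[OF symA symB edA edB _ k]
      eigenvalue_le_of_quadratic_form_le[OF symB symA edB edA _ k]
    by blast+
  then show ?thesis by linarith
qed

lemma perturbed_eigenvalue_gap:
  fixes \<mu> \<nu> :: "nat \<Rightarrow> real"
  assumes "antimono_on {1..n} \<mu>" "antimono_on {1..n} \<nu>"
    and close: "\<forall>k\<in>{1..n}. \<bar>\<mu> k - \<nu> k\<bar> \<le> \<delta>" and "\<delta> < g" and i: "i \<in> {1..n}"
    and below: "2 \<le> i \<Longrightarrow> g \<le> \<bar>\<mu> i - \<nu> (i - 1)\<bar>"
    and above: "i < n \<Longrightarrow> g \<le> \<bar>\<mu> i - \<nu> (i + 1)\<bar>"
    and j: "j \<in> {1..n}" "j \<noteq> i"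
  shows "g \<le> \<bar>\<nu> j - \<mu> i\<bar>"
proof (cases "j < i")
  case True
  have "\<mu> i \<le> \<mu> (i - 1)" by (rule monotone_onD[OF assms(1)]) (use i j True in auto)
  moreover have "\<nu> (i - 1) \<le> \<nu> j" by (rule monotone_onD[OF assms(2)]) (use i j True in auto)
  moreover have "\<bar>\<mu> (i - 1) - \<nu> (i - 1)\<bar> \<le> \<delta>" by (intro close[rule_format]) (use i j True in auto)
  moreover have "g \<le> \<bar>\<mu> i - \<nu> (i - 1)\<bar>" using below i j True by auto
  ultimately show ?thesis using \<open>\<delta> < g\<close> by arith
next
  case False
  then have "i < j" using j by auto
  have "\<mu> (i + 1) \<le> \<mu> i" by (rule monotone_onD[OF assms(1)]) (use i j \<open>i < j\<close> in auto)
  moreover have "\<nu> j \<le> \<nu> (i + 1)" by (rule monotone_onD[OF assms(2)]) (use i j \<open>i < j\<close> in auto)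
  moreover have "\<bar>\<mu> (i + 1) - \<nu> (i + 1)\<bar> \<le> \<delta>" by (intro close[rule_format]) (use i j \<open>i < j\<close> in auto)
  moreover have "g \<le> \<bar>\<mu> i - \<nu> (i + 1)\<bar>" using above i j \<open>i < j\<close> by auto
  ultimately show ?thesis using \<open>\<delta> < g\<close> by arith
qed

text \<open>
  Quantifying over all finite \<open>g \<le> D\<close> also covers \<open>D = \<infinity>\<close>, which the boundary conventions
  \<open>\<mu>'\<^sub>0 = \<infinity>\<close>, \<open>\<mu>'\<^bsub>n+1\<^esub> = -\<infinity>\<close> produce and where \<open>C / D = 0\<close>.
\<close>

lemma ereal_le_divide_if_scaled_le:
  fixes D :: ereal
  assumes "0 < D" and scaled: "\<forall>g>0. ereal g \<le> D \<longrightarrow> g * s \<le> C"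
  shows "ereal s \<le> ereal C / D"
proof (cases D)
  case (real d)
  then show ?thesis using assms by (simp add: pos_le_divide_eq mult.commute)
next
  case PInf
  have "s \<le> 0"
  proof (rule ccontr)
    assume "\<not> s \<le> 0"
    then have "(\<bar>C\<bar> + 1) / s * s \<le> C"
      using scaled[rule_format, of "(\<bar>C\<bar> + 1) / s"] PInf by simp
    then show False using \<open>\<not> s \<le> 0\<close> by simp
  qed
  then show ?thesis using PInf by simp
next
  case MInf
  then show ?thesis using assms(1) by simp
qed

lemma ereal_le_abs_diff_ext_eig_iff:
  "k \<in> {1..n} \<Longrightarrow> ereal g \<le> \<bar>ereal a - ext_eig n \<mu> k\<bar> \<longleftrightarrow> g \<le> \<bar>a - \<mu> k\<bar>"
  by (simp add: ext_eig_def)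

lemma sin_vec_angle_eigenvectors_le_divide_gap:
  fixes A B :: "real^'n::finite^'n"
  assumes symA: "transpose A = A" and symB: "transpose B = B"
    and edA: "eigen_decomp A \<alpha> a" and edB: "eigen_decomp B \<beta> b"
    and norm: "\<forall>v. norm ((A - B) *v v) \<le> C * norm v" and i: "i \<in> {1..CARD('n)}"
    and gap_pos: "0 < min \<bar>ereal (\<alpha> i) - ext_eig CARD('n) \<beta> (i - 1)\<bar>
                          \<bar>ereal (\<alpha> i) - ext_eig CARD('n) \<beta> (i + 1)\<bar>"
  shows "ereal (sin (vec_angle (a i) (b i))) \<le>
    ereal C / min \<bar>ereal (\<alpha> i) - ext_eig CARD('n) \<beta> (i - 1)\<bar>
                  \<bar>ereal (\<alpha> i) - ext_eig CARD('n) \<beta> (i + 1)\<bar>"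
proof (intro ereal_le_divide_if_scaled_le[OF gap_pos] allI impI)
  let ?n = "CARD('n)"
  fix g :: real
  assume "0 < g" and g_le: "ereal g \<le> min \<bar>ereal (\<alpha> i) - ext_eig ?n \<beta> (i - 1)\<bar>
                                         \<bar>ereal (\<alpha> i) - ext_eig ?n \<beta> (i + 1)\<bar>"
  show "g * sin (vec_angle (a i) (b i)) \<le> C"
  proof (cases "g \<le> C")
    case True
    then show ?thesis using \<open>0 < g\<close> sin_le_one[of "vec_angle (a i) (b i)"]
      by (meson mult_left_le order_trans less_imp_le)
  next
    case False
    have "g \<le> \<bar>\<alpha> i - \<beta> (i - 1)\<bar>" if "2 \<le> i"
    proof -
      have "i - 1 \<in> {1..?n}" using that i by auto
      then show ?thesis using g_le ereal_le_abs_diff_ext_eig_iff by simp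
    qed
    moreover have "g \<le> \<bar>\<alpha> i - \<beta> (i + 1)\<bar>" if "i < ?n"
    proof -
      have "i + 1 \<in> {1..?n}" using that by auto
      then show ?thesis using g_le ereal_le_abs_diff_ext_eig_iff by simp
    qed
    ultimately have "\<forall>j\<in>{1..?n} - {i}. g \<le> \<bar>\<beta> j - \<alpha> i\<bar>"
      using perturbed_eigenvalue_gap[OF eigen_decomp_antimono_on[OF edA] eigen_decomp_antimono_on[OF edB]
          _ _ i, of C g] weyl_eigenvalue_perturbation[OF symA symB edA edB norm] False
      by auto
    moreover have "a i \<noteq> 0" and "A *v a i = \<alpha> i *\<^sub>R a i"
      using edA i by (auto simp: eigen_decomp_def)
    then have "norm (B *v a i - \<alpha> i *\<^sub>R a i) \<le> C * norm (a i)"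
      using norm by (metis matrix_vector_mult_diff_rdistrib minus_diff_eq norm_minus_cancel)
    ultimately show ?thesis
      using davis_kahan_sin_vec_angle_le[OF symB edB i \<open>a i \<noteq> 0\<close>] \<open>0 < g\<close> by simp
  qed
qed

lemma laplacian_symmetric:
  assumes "weighted_graph w"
  shows "transpose (laplacian w) = laplacian w"
  using assms
  unfolding transpose_def laplacian_def deg_matrix_def adj_matrix_def weighted_graph_def
  by (auto simp: vec_eq_iff)

theorem lemma1:
  fixes w wh :: "'n::finite \<Rightarrow> 'n \<Rightarrow> real"
    and \<epsilon> :: real
    and \<mu> \<mu>h :: "nat \<Rightarrow> real"
    and x xh :: "nat \<Rightarrow> real^'n"
  assumes "weighted_graph w"
    and "0 < \<epsilon>" and "\<epsilon> < 1"
    and "spectral_sparsifier \<epsilon> w wh"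
    and "eigen_decomp (laplacian w) \<mu> x"
    and "eigen_decomp (laplacian wh) \<mu>h xh"
    and "\<forall>i\<in>{1..CARD('n)}.
           \<bar>ereal (\<mu> i) - ext_eig CARD('n) \<mu>h (i - 1)\<bar> \<noteq> 0 \<and>
           \<bar>ereal (\<mu> i) - ext_eig CARD('n) \<mu>h (i + 1)\<bar> \<noteq> 0"
  shows "spec_norm (laplacian w - laplacian wh) \<le> \<epsilon> * spec_radius (laplacian w) \<and>
    (\<forall>i\<in>{1..CARD('n)}.
           ereal (sin (vec_angle (x i) (xh i))) \<le>
             ereal (\<epsilon> * spec_radius (laplacian w)) /
             min \<bar>ereal (\<mu> i) - ext_eig CARD('n) \<mu>h (i - 1)\<bar>
                 \<bar>ereal (\<mu> i) - ext_eig CARD('n) \<mu>h (i + 1)\<bar>)"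
proof -
  let ?L = "laplacian w" and ?Lh = "laplacian wh"
  have sym: "transpose ?L = ?L" "transpose ?Lh = ?Lh"
    using laplacian_symmetric assms(1,4) unfolding spectral_sparsifier_def by blast+
  have "\<forall>v. \<bar>v \<bullet> (?L *v v) - v \<bullet> (?Lh *v v)\<bar> \<le> \<epsilon> * (v \<bullet> (?L *v v))"
    using assms(4) unfolding spectral_sparsifier_def by (auto simp: abs_le_iff algebra_simps)
  then have norm: "\<forall>v. norm ((?L - ?Lh) *v v) \<le> \<epsilon> * spec_radius ?L * norm v"
    using norm_diff_le_of_relative_quadratic_form[OF sym assms(5)] assms(2) by simp
  then have "spec_norm (?L - ?Lh) \<le> \<epsilon> * spec_radius ?L"
    unfolding spec_norm_def by (intro onorm_le) blast
  moreover have "0 < min \<bar>ereal (\<mu> i) - ext_eig CARD('n) \<mu>h (i - 1)\<bar>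
                         \<bar>ereal (\<mu> i) - ext_eig CARD('n) \<mu>h (i + 1)\<bar>" if "i \<in> {1..CARD('n)}" for i
    using assms(7) that by (simp add: order_less_le min_def)
  ultimately show ?thesis
    using sin_vec_angle_eigenvectors_le_divide_gap[OF sym assms(5,6) norm] by blast
qed

end
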